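(* Let $s\ge1$ and $\varphi\in\mathcal B_s\cap\big(S_1(\zeta_2,\zeta_{22})\circ S_{s-1}(A)\big)$. Then $\varphi\in S_s(\zeta_2,\zeta_{22})$.
   Context: Forms on $\mathbf P^1\times\mathbf P^1$: $\zeta_i=dz_i/z_i$, $\zeta_{ii}=dz_i/(1-z_i)$ ($i=1,2$), $\zeta_{12}=d(z_1z_2)/(1-z_1z_2)$; $A=\{\zeta_1,\zeta_{11},\zeta_2,\zeta_{22},\zeta_{12}\}$. $S_s(A)$ is the vector space with basis the words of length $s$ in $A$, $\circ$ is concatenation. $S_1(\zeta_2,\zeta_{22})\circ S_{s-1}(A)$ is the span of words of length $s$ whose first letter is $\zeta_2$ or $\zeta_{22}$, and $S_s(\zeta_2,\zeta_{22})$ the span of words of length $s$ in the letters $\zeta_2,\zeta_{22}$ only. A homogeneous element $\sum_Ic_I\omega_{i_1}\circ\cdots\circ\omega_{i_s}\in S_s(A)$ satisfies Chen's integrability condition if for each $1\le l<s$, $\sum_Ic_I\omega_{i_1}\otimes\cdots\otimes(\omega_{i_l}\wedge\omega_{i_{l+1}})\otimes\cdots\otimes\omega_{i_s}=0$ as a multiple differential form; $\mathcal B_s$ is the space of elements of $S_s(A)$ satisfying it. *)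

theory Defs
  imports Complex_Main
begin

datatype letter = Z1 | Z11 | Z2 | Z22 | Z12

text \<open>Coordinates of the 1-forms in the basis dz1 (component 0), dz2 (component 1),
  as functions of the point (z1,z2).\<close>
fun coef :: "letter \<Rightarrow> nat \<Rightarrow> complex \<times> complex \<Rightarrow> complex" where
  "coef Z1 j (z1, z2) = (if j = 0 then 1 / z1 else 0)"
| "coef Z11 j (z1, z2) = (if j = 0 then 1 / (1 - z1) else 0)"
| "coef Z2 j (z1, z2) = (if j = 0 then 0 else 1 / z2)"
| "coef Z22 j (z1, z2) = (if j = 0 then 0 else 1 / (1 - z2))"
| "coef Z12 j (z1, z2) = (if j = 0 then z2 / (1 - z1 * z2) else z1 / (1 - z1 * z2))"

text \<open>Coefficient of dz1 \<and> dz2 in the 2-form a \<and> b.\<close>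
definition wedge :: "letter \<Rightarrow> letter \<Rightarrow> complex \<times> complex \<Rightarrow> complex" where
  "wedge a b p = coef a 0 p * coef b 1 p - coef a 1 p * coef b 0 p"

text \<open>Open set of P^1 x P^1 (affine chart) off the polar divisor, where all forms are regular.\<close>
definition U :: "(complex \<times> complex) set" where
  "U = {(z1, z2). z1 \<noteq> 0 \<and> z1 \<noteq> 1 \<and> z2 \<noteq> 0 \<and> z2 \<noteq> 1 \<and> z1 * z2 \<noteq> 1}"

definition words :: "nat \<Rightarrow> letter list set" where
  "words s = {w. length w = s}"

definition S :: "nat \<Rightarrow> (letter list \<Rightarrow> complex) set" where
  "S s = {c. \<forall>w. c w \<noteq> 0 \<longrightarrow> length w = s}"

text \<open>The multiple differential form w_1 (x) ... (x) (w_{l+1} \<and> w_{l+2}) (x) ... (x) w_s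
  (0-based wedge position l), realised as a function on U^(s-1): the k-th tensor factor
  is evaluated at the k-th point, 1-form factors are taken in component js k, the 2-form
  factor is its dz1\<and>dz2 coefficient. This realisation of the tensor product over C is
  injective.\<close>
definition chen_term :: "letter list \<Rightarrow> nat \<Rightarrow> (nat \<Rightarrow> nat) \<Rightarrow> (nat \<Rightarrow> complex \<times> complex) \<Rightarrow> complex" where
  "chen_term w l js ps =
     (\<Prod>k<l. coef (w ! k) (js k) (ps k)) *
     wedge (w ! l) (w ! Suc l) (ps l) *
     (\<Prod>k\<in>{Suc (Suc l)..<length w}. coef (w ! k) (js (k - 1)) (ps (k - 1)))"

definition chen_integrable :: "nat \<Rightarrow> (letter list \<Rightarrow> complex) \<Rightarrow> bool" where
  "chen_integrable s c \<longleftrightarrow>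
     (\<forall>l. Suc l < s \<longrightarrow> (\<forall>js ps. (\<forall>k. ps k \<in> U) \<longrightarrow>
        (\<Sum>w\<in>words s. c w * chen_term w l js ps) = 0))"

definition B :: "nat \<Rightarrow> (letter list \<Rightarrow> complex) set" where
  "B s = {c \<in> S s. chen_integrable s c}"

definition S_first2 :: "nat \<Rightarrow> (letter list \<Rightarrow> complex) set" where
  "S_first2 s = {c \<in> S s. \<forall>w. c w \<noteq> 0 \<longrightarrow> w \<noteq> [] \<and> hd w \<in> {Z2, Z22}}"

definition S_only2 :: "nat \<Rightarrow> (letter list \<Rightarrow> complex) set" where
  "S_only2 s = {c \<in> S s. \<forall>w. c w \<noteq> 0 \<longrightarrow> set w \<subseteq> {Z2, Z22}}"

end

theory Submission
  imports Defs
begin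

text \<open>Suppose every word in the support of \<phi> has its first m letters in {zeta_2, zeta_22}.
  In Chen's condition at the wedge of the letters m-1 and m, a word whose m-th letter is again
  zeta_2 or zeta_22 contributes nothing, since dz2 \<and> dz2 = 0. The remaining words contribute a
  tensor product of 1-forms with one 2-form a \<and> b, a \<in> {zeta_2, zeta_22}, b \<in> {zeta_1, zeta_11, zeta_12}.
  The five 1-forms are linearly independent, and so are these six 2-forms; hence the tensor
  products are independent and all these words have coefficient 0. Induction on m finishes.\<close>

definition lin_indep_on :: "'b set \<Rightarrow> 'x set \<Rightarrow> ('b \<Rightarrow> 'x \<Rightarrow> complex) \<Rightarrow> bool" where
  "lin_indep_on K D f \<longleftrightarrow>
     (\<forall>Bs d. finite Bs \<longrightarrow> Bs \<subseteq> K \<longrightarrow> (\<forall>x\<in>D. (\<Sum>b\<in>Bs. d b * f b x) = 0) \<longrightarrow> (\<forall>b\<in>Bs. d b = 0))"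

lemma lin_indep_onD:
  "lin_indep_on K D f \<Longrightarrow> finite Bs \<Longrightarrow> Bs \<subseteq> K \<Longrightarrow> (\<And>x. x \<in> D \<Longrightarrow> (\<Sum>b\<in>Bs. d b * f b x) = 0)
    \<Longrightarrow> b \<in> Bs \<Longrightarrow> d b = 0"
  unfolding lin_indep_on_def by blast

lemma lin_indep_on_finiteI:
  assumes "finite K"
    and "\<And>e. (\<And>x. x \<in> D \<Longrightarrow> (\<Sum>b\<in>K. e b * f b x) = 0) \<Longrightarrow> \<forall>b\<in>K. e b = 0"
  shows "lin_indep_on K D f"
  unfolding lin_indep_on_def
proof (intro allI impI)
  fix Bs d assume "finite Bs" "Bs \<subseteq> K" and Bs: "\<forall>x\<in>D. (\<Sum>b\<in>Bs. d b * f b x) = 0"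
  define e where "e b = (if b \<in> Bs then d b else 0)" for b
  have "(\<Sum>b\<in>K. e b * f b x) = (\<Sum>b\<in>Bs. d b * f b x)" for x
    using \<open>finite K\<close> \<open>Bs \<subseteq> K\<close> by (intro sum.mono_neutral_cong_right) (auto simp: e_def)
  then have "\<forall>b\<in>K. e b = 0" using assms(2) Bs by simp
  then show "\<forall>b\<in>Bs. d b = 0" using \<open>Bs \<subseteq> K\<close> by (force simp: e_def)
qed

lemma tensor_lin_indep:
  fixes f :: "nat \<Rightarrow> 'b \<Rightarrow> 'x \<Rightarrow> complex" and key :: "nat \<Rightarrow> 'w \<Rightarrow> 'b"
  assumes "\<And>k. k < n \<Longrightarrow> lin_indep_on (K k) (D k) (f k)"
    and "finite W" and "\<And>w k. w \<in> W \<Longrightarrow> k < n \<Longrightarrow> key k w \<in> K k"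
    and "\<And>w w'. w \<in> W \<Longrightarrow> w' \<in> W \<Longrightarrow> (\<forall>k<n. key k w = key k w') \<Longrightarrow> w = w'"
    and "\<And>xs. (\<forall>k<n. xs k \<in> D k) \<Longrightarrow> (\<Sum>w\<in>W. c w * (\<Prod>k<n. f k (key k w) (xs k))) = 0"
  shows "\<forall>w\<in>W. c w = 0"
  using assms
proof (induction n arbitrary: W c)
  case 0
  show ?case
  proof
    fix w assume "w \<in> W"
    then have "W = {w}" using "0.prems"(4) by blast
    then show "c w = 0" using "0.prems"(5) by simp
  qed
next
  case (Suc m)
  define keys where "keys = key m ` W"
  define Wb where "Wb b = {w \<in> W. key m w = b}" for b
  have fiber_sum: "(\<Sum>w\<in>Wb b. c w * (\<Prod>k<m. f k (key k w) (xs k))) = 0"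
    if "b \<in> keys" and xs: "\<forall>k<m. xs k \<in> D k" for b xs
  proof -
    let ?d = "\<lambda>b. \<Sum>w\<in>Wb b. c w * (\<Prod>k<m. f k (key k w) (xs k))"
    have "(\<Sum>b\<in>keys. ?d b * f m b t) = 0" if t: "t \<in> D m" for t
    proof -
      have "(\<Sum>b\<in>keys. ?d b * f m b t) = (\<Sum>b\<in>keys. \<Sum>w\<in>Wb b. c w * (\<Prod>k<Suc m. f k (key k w) ((xs(m := t)) k)))"
        by (auto simp: sum_distrib_right Wb_def mult.assoc intro!: sum.cong)
      also have "\<dots> = (\<Sum>w\<in>W. c w * (\<Prod>k<Suc m. f k (key k w) ((xs(m := t)) k)))"
        unfolding Wb_def keys_def using Suc.prems(2) by (intro sum.group) auto
      also have "\<dots> = 0"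
        using xs t by (intro Suc.prems(5)) (auto simp: less_Suc_eq)
      finally show ?thesis .
    qed
    moreover have "finite keys" "keys \<subseteq> K m"
      using Suc.prems(2,3) by (auto simp: keys_def)
    ultimately show ?thesis
      using lin_indep_onD[OF Suc.prems(1)[of m], of keys ?d b] that(1) by blast
  qed
  show ?case
  proof
    fix w assume "w \<in> W"
    have "\<forall>w'\<in>Wb (key m w). c w' = 0"
      using Suc.prems(2,3,4) fiber_sum[of "key m w"] \<open>w \<in> W\<close>
      by (intro Suc.IH[OF Suc.prems(1)]) (auto simp: Wb_def keys_def less_Suc_eq)
    then show "c w = 0" using \<open>w \<in> W\<close> by (auto simp: Wb_def)
  qed
qed

lemma UNIV_letter: "(UNIV :: letter set) = {Z1, Z11, Z2, Z22, Z12}"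
  using letter.exhaust by auto

instance letter :: finite
  by standard (simp add: UNIV_letter)

lemma finite_words: "finite (words s)"
  using finite_lists_length_eq[of "UNIV :: letter set" s] by (simp add: words_def)

lemma points_in_U:
  "(2, 2) \<in> U" "(2, 3) \<in> U" "(3, 2) \<in> U" "(3, 3) \<in> U" "(4, 2) \<in> U" "(4, 3) \<in> U"
  by (auto simp: U_def)

lemma lin_indep_coef:
  "lin_indep_on (range (\<lambda>a. [a])) (UNIV \<times> U) (\<lambda>b x. coef (hd b) (fst x) (snd x))"
proof (rule lin_indep_on_finiteI)
  fix e :: "letter list \<Rightarrow> complex"
  assume h: "\<And>x. x \<in> UNIV \<times> U \<Longrightarrow> (\<Sum>b\<in>range (\<lambda>a. [a]). e b * coef (hd b) (fst x) (snd x)) = 0"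
  have sum: "e [Z1] * coef Z1 j p + e [Z11] * coef Z11 j p + e [Z2] * coef Z2 j p
      + e [Z22] * coef Z22 j p + e [Z12] * coef Z12 j p = 0" if "p \<in> U" for j p
    using h[of "(j, p)"] that by (simp add: sum.reindex UNIV_letter add.assoc)
  have e1: "e [Z1] / 2 - e [Z11] - e [Z12] * 2 / 3 = 0"
    using sum[OF points_in_U(1), of 0] by (simp add: field_simps)
  have e2: "e [Z1] / 2 - e [Z11] - e [Z12] * 3 / 5 = 0"
    using sum[OF points_in_U(2), of 0] by (simp add: field_simps)
  have e3: "e [Z1] / 3 - e [Z11] / 2 - e [Z12] * 2 / 5 = 0"
    using sum[OF points_in_U(3), of 0] by (simp add: field_simps)
  have f1: "e [Z2] / 2 - e [Z22] - e [Z12] * 2 / 3 = 0"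
    using sum[OF points_in_U(1), of 1] by (simp add: field_simps)
  have f2: "e [Z2] / 3 - e [Z22] / 2 - e [Z12] * 2 / 5 = 0"
    using sum[OF points_in_U(2), of 1] by (simp add: field_simps)
  have "e [Z12] = 0" using e1 e2 by algebra
  moreover have "e [Z1] = 0" "e [Z11] = 0" using e1 e3 \<open>e [Z12] = 0\<close> by algebra+
  moreover have "e [Z2] = 0" "e [Z22] = 0" using f1 f2 \<open>e [Z12] = 0\<close> by algebra+
  ultimately have "e [a] = 0" for a by (cases a) simp_all
  then show "\<forall>b\<in>range (\<lambda>a. [a]). e b = 0" by blast
qed simp

definition wedge_blocks :: "letter list set" where
  "wedge_blocks = {[Z2, Z1], [Z2, Z11], [Z2, Z12], [Z22, Z1], [Z22, Z11], [Z22, Z12]}"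

lemma lin_indep_wedge:
  "lin_indep_on wedge_blocks ((UNIV :: nat set) \<times> U) (\<lambda>b x. wedge (b ! 0) (b ! 1) (snd x))"
proof (rule lin_indep_on_finiteI)
  fix e :: "letter list \<Rightarrow> complex"
  assume h: "\<And>x. x \<in> (UNIV :: nat set) \<times> U \<Longrightarrow> (\<Sum>b\<in>wedge_blocks. e b * wedge (b ! 0) (b ! 1) (snd x)) = 0"
  have "(\<Sum>b\<in>wedge_blocks. e b * wedge (b ! 0) (b ! 1) p) = 0" if "p \<in> U" for p
    using h[of "(0, p)"] that by simp
  note sum = this[unfolded wedge_blocks_def, simplified]
  note at_points = sum[OF points_in_U(1)] sum[OF points_in_U(2)] sum[OF points_in_U(3)]
    sum[OF points_in_U(4)] sum[OF points_in_U(5)] sum[OF points_in_U(6)]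
  have "e [Z2, Z1] = 0 \<and> e [Z2, Z11] = 0 \<and> e [Z2, Z12] = 0 \<and> e [Z22, Z1] = 0
      \<and> e [Z22, Z11] = 0 \<and> e [Z22, Z12] = 0"
    using at_points[simplified wedge_def, simplified, simplified field_simps] by algebra
  then show "\<forall>b\<in>wedge_blocks. e b = 0" by (simp add: wedge_blocks_def)
qed (simp add: wedge_blocks_def)

definition chen_block :: "nat \<Rightarrow> nat \<Rightarrow> letter list \<Rightarrow> letter list" where
  "chen_block l k w = (if k < l then [w ! k] else if k = l then [w ! l, w ! Suc l] else [w ! Suc k])"

definition chen_factor :: "nat \<Rightarrow> nat \<Rightarrow> letter list \<Rightarrow> nat \<times> (complex \<times> complex) \<Rightarrow> complex" where
  "chen_factor l k b x =
     (if k = l then wedge (b ! 0) (b ! 1) (snd x) else coef (hd b) (fst x) (snd x))"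

lemma prod_chen_factor:
  assumes "length w = Suc n" "l < n"
  shows "(\<Prod>k<n. chen_factor l k (chen_block l k w) (js k, ps k)) = chen_term w l js ps"
proof -
  let ?g = "\<lambda>k. chen_factor l k (chen_block l k w) (js k, ps k)"
  have "(\<Prod>k<n. ?g k) = (\<Prod>k\<in>{0..<l}. ?g k) * (\<Prod>k\<in>{l..<n}. ?g k)"
    using \<open>l < n\<close> by (simp add: lessThan_atLeast0 prod.atLeastLessThan_concat)
  also have "(\<Prod>k\<in>{l..<n}. ?g k) = ?g l * (\<Prod>k\<in>{Suc l..<n}. ?g k)"
    using \<open>l < n\<close> by (simp add: prod.atLeast_Suc_lessThan)
  also have "(\<Prod>k\<in>{0..<l}. ?g k) = (\<Prod>k<l. coef (w ! k) (js k) (ps k))"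
    by (auto simp: chen_factor_def chen_block_def lessThan_atLeast0 intro!: prod.cong)
  also have "?g l = wedge (w ! l) (w ! Suc l) (ps l)"
    by (simp add: chen_factor_def chen_block_def)
  also have "(\<Prod>k\<in>{Suc l..<n}. ?g k) = (\<Prod>k\<in>{Suc l..<n}. coef (w ! Suc k) (js k) (ps k))"
    by (auto simp: chen_factor_def chen_block_def intro!: prod.cong)
  also have "\<dots> = (\<Prod>k\<in>{Suc (Suc l)..<length w}. coef (w ! k) (js (k - 1)) (ps (k - 1)))"
    using assms(1) prod.shift_bounds_nat_ivl[of "\<lambda>k. coef (w ! k) (js (k - 1)) (ps (k - 1))" "Suc l" 1 n]
    by simp
  finally show ?thesis by (simp add: chen_term_def mult.assoc lessThan_atLeast0)
qed

lemma chen_block_inj: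
  assumes "length w = Suc n" "length w' = Suc n" "l < n"
    and "\<forall>k<n. chen_block l k w = chen_block l k w'"
  shows "w = w'"
proof (rule nth_equalityI)
  show "length w = length w'" using assms by simp
next
  fix i assume "i < length w"
  consider "i < l" | "i = l \<or> i = Suc l" | "Suc l < i" by linarith
  then show "w ! i = w' ! i"
  proof cases
    case 1
    then show ?thesis using assms(3,4) by (auto simp: chen_block_def dest!: spec[of _ i])
  next
    case 2
    then show ?thesis using assms(3,4) by (auto simp: chen_block_def dest!: spec[of _ l])
  next
    case 3
    then have "i - 1 < n" "\<not> i - 1 < l" "i - 1 \<noteq> l" "Suc (i - 1) = i"
      using \<open>i < length w\<close> assms(1) by auto
    then show ?thesis using assms(4) by (auto simp: chen_block_def dest!: spec[of _ "i - 1"])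
  qed
qed

lemma chen_term_Z2_Z22:
  "w ! l \<in> {Z2, Z22} \<Longrightarrow> w ! Suc l \<in> {Z2, Z22} \<Longrightarrow> chen_term w l js ps = 0"
  by (cases "ps l") (auto simp: chen_term_def wedge_def)

lemma wedge_blocksI: "a \<in> {Z2, Z22} \<Longrightarrow> b \<notin> {Z2, Z22} \<Longrightarrow> [a, b] \<in> wedge_blocks"
  by (cases b) (auto simp: wedge_blocks_def)

lemma chen_integrable_next_letter:
  assumes "\<phi> \<in> S s" and integrable: "chen_integrable s \<phi>" and "0 < m" "m < s"
    and prefix: "\<And>w i. \<phi> w \<noteq> 0 \<Longrightarrow> i < m \<Longrightarrow> w ! i \<in> {Z2, Z22}"
    and "\<phi> w \<noteq> 0"
  shows "w ! m \<in> {Z2, Z22}"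
proof (rule ccontr)
  assume "w ! m \<notin> {Z2, Z22}"
  define l where "l = m - 1"
  define n where "n = s - 1"
  have "Suc l = m" "s = Suc n" "l < n" using assms(3,4) by (auto simp: l_def n_def)
  define W where "W = {w \<in> words s. \<phi> w \<noteq> 0 \<and> w ! m \<notin> {Z2, Z22}}"
  define K where "K k = (if k = l then wedge_blocks else range (\<lambda>a. [a]))" for k
  have length_W: "length w = Suc n" if "w \<in> W" for w
    using that \<open>s = Suc n\<close> by (simp add: W_def words_def)
  have "\<forall>w\<in>W. \<phi> w = 0"
  proof (rule tensor_lin_indep[where f = "chen_factor l" and key = "chen_block l" and K = K
        and D = "\<lambda>_. UNIV \<times> U" and n = n])
    show "lin_indep_on (K k) (UNIV \<times> U) (chen_factor l k)" for k
      using lin_indep_wedge lin_indep_coef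
      by (cases "k = l") (simp_all add: K_def chen_factor_def[abs_def])
    show "finite W" using finite_words by (simp add: W_def)
    show "chen_block l k w \<in> K k" if "w \<in> W" and "k < n" for w k
      using that prefix[of w l] \<open>Suc l = m\<close>
      by (auto simp: chen_block_def K_def W_def intro: wedge_blocksI)
    show "w = w'" if "w \<in> W" "w' \<in> W" "\<forall>k<n. chen_block l k w = chen_block l k w'" for w w'
      using chen_block_inj length_W that \<open>l < n\<close> by blast
  next
    fix xs :: "nat \<Rightarrow> nat \<times> complex \<times> complex" assume xs: "\<forall>k<n. xs k \<in> UNIV \<times> U"
    define js where "js k = fst (xs k)" for k
    define ps where "ps k = (if k < n then snd (xs k) else (2, 2))" for k
    have "\<forall>k. ps k \<in> U" using xs points_in_U by (auto simp: ps_def)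
    have "(\<Sum>w\<in>W. \<phi> w * (\<Prod>k<n. chen_factor l k (chen_block l k w) (xs k)))
        = (\<Sum>w\<in>W. \<phi> w * chen_term w l js ps)"
      by (intro sum.cong refl arg_cong2[where f = "(*)"], subst prod_chen_factor[symmetric])
        (auto simp: length_W \<open>l < n\<close> js_def ps_def intro!: prod.cong)
    also have "\<dots> = (\<Sum>w\<in>words s. \<phi> w * chen_term w l js ps)"
      using finite_words prefix[of _ l] \<open>Suc l = m\<close>
      by (intro sum.mono_neutral_left) (auto simp: W_def chen_term_Z2_Z22)
    also have "\<dots> = 0"
      using integrable \<open>\<forall>k. ps k \<in> U\<close> \<open>Suc l = m\<close> \<open>m < s\<close> by (auto simp: chen_integrable_def)
    finally show "(\<Sum>w\<in>W. \<phi> w * (\<Prod>k<n. chen_factor l k (chen_block l k w) (xs k))) = 0" .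
  qed
  moreover have "w \<in> W"
    using assms(1,6) \<open>w ! m \<notin> {Z2, Z22}\<close> by (auto simp: W_def words_def S_def)
  ultimately show False using \<open>\<phi> w \<noteq> 0\<close> by blast
qed

theorem lemma5p8:
  fixes s :: nat and \<phi> :: "letter list \<Rightarrow> complex"
  assumes "s \<ge> 1"
    and "\<phi> \<in> B s \<inter> S_first2 s"
  shows "\<phi> \<in> S_only2 s"
proof -
  have "\<phi> \<in> S s" "chen_integrable s \<phi>" and first: "\<phi> \<in> S_first2 s"
    using assms(2) by (auto simp: B_def)
  have letter: "w ! i \<in> {Z2, Z22}" if "\<phi> w \<noteq> 0" "i < s" for w i
    using that
  proof (induction i arbitrary: w rule: less_induct)
    case (less i)
    show ?case
    proof (cases "i = 0")
      case True
      then show ?thesis using first less.prems(1) by (auto simp: S_first2_def hd_conv_nth)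
    next
      case False
      then show ?thesis
        using chen_integrable_next_letter[OF \<open>\<phi> \<in> S s\<close> \<open>chen_integrable s \<phi>\<close>] less by simp
    qed
  qed
  have "set w \<subseteq> {Z2, Z22}" if "\<phi> w \<noteq> 0" for w
  proof -
    have "length w = s" using \<open>\<phi> \<in> S s\<close> that by (simp add: S_def)
    then show ?thesis using letter[OF that] by (metis in_set_conv_nth subsetI)
  qed
  then show ?thesis using \<open>\<phi> \<in> S s\<close> by (simp add: S_only2_def)
qed

end
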